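(* Let $(X,d,\preccurlyeq)$ be a preordered $s$-regular $b$-metric space. Let $T,S:X\to X$ be self mappings and suppose there exists $x_0\in X$ such that $T(x_0)\preccurlyeq S(x_0)$. Suppose that: (i) $T$ is isotone; (ii) $S$ covers $T$ on the set $O_X(x_0)$; (iii) every chain $C\in\mathcal{C}(x_0,T,S,\preccurlyeq)$ has a lower bound $w\in X$ (i.e. $w\preccurlyeq x$ for all $x\in C$) satisfying $w\preccurlyeq T(w)$, and there exists $z\in X$ such that $S^i(z)\preccurlyeq S(w)\preccurlyeq T(w)$ for all $i\in\mathbb{N}$ and $d(T^i(w),S^i(z))\to 0$ as $i\to\infty$. Then the set $\mathrm{Coin}(T,S)\cap O_X(x_0)$ is nonempty and contains a minimal element.
   Context: A $b$-metric space with coefficient $s\ge 1$ is a nonempty set $X$ with a function $d:X\times X\to[0,\infty)$ such that for all $x,y,z\in X$: $d(x,y)=0$ iff $x=y$; $d(x,y)=d(y,x)$; $d(x,y)\le s[d(x,z)+d(z,y)]$. A preorder is a reflexive and transitive binary relation $\preccurlyeq$; $x\succcurlyeq y$ means $y\preccurlyeq x$, and $x\prec y$ means $x\preccurlyeq y$ and $x\ne y$. A preordered $s$-regular $b$-metric space $(X,d,\preccurlyeq)$ is a $b$-metric space with coefficient $s\ge1$ equipped with a preorder $\preccurlyeq$ such that for all $x,y,z\in X$, $x\preccurlyeq y\preccurlyeq z$ implies $\max\{d(x,y),d(y,z)\}\le s^2 d(x,z)$. A chain is a subset of $X$ any two elements of which are comparable under $\preccurlyeq$. A map $T:X\to X$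 is isotone if $x\preccurlyeq y$ implies $T(x)\preccurlyeq T(y)$. $T^i$ denotes the $i$-th iterate of $T$. For $x_0\in X$, $O_X(x_0)=\{x\in X: x\preccurlyeq x_0\}$. $\mathrm{Coin}(T,S)=\{x\in X: T(x)=S(x)\}$. A map $S$ covers a map $T$ on a set $A\subset X$ if for every $x\in A$ with $T(x)\preccurlyeq S(x)$ there exists $y\in X$ with $y\preccurlyeq x$ and $S(y)=T(x)$. $\mathcal{C}(T,S,\preccurlyeq)$ is the set of chains $C\subset X$ such that for all $x,y\in C$: $T(x)\preccurlyeq S(x)$; $x\prec y$ implies $S(x)\preccurlyeq T(y)$; and $S(C)\subset T(X)$. $\mathcal{C}(x_0,T,S,\preccurlyeq)=\{C\in\mathcal{C}(T,S,\preccurlyeq): C\subset O_X(x_0)\text{ and } S(C)\subset T(O_X(x_0))\}$. A minimal element of a set $A\subset X$ is an element $w\in A$ such that there is no $u\in A$ with $u\prec w$. *)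

theory Defs
  imports "HOL-Analysis.Analysis"
begin

text \<open>The whole type 'a plays the role of the nonempty set X.\<close>

definition b_metric :: "('a \<Rightarrow> 'a \<Rightarrow> real) \<Rightarrow> real \<Rightarrow> bool" where
  "b_metric d s \<longleftrightarrow> s \<ge> 1 \<and>
     (\<forall>x y. d x y \<ge> 0) \<and>
     (\<forall>x y. d x y = 0 \<longleftrightarrow> x = y) \<and>
     (\<forall>x y. d x y = d y x) \<and>
     (\<forall>x y z. d x y \<le> s * (d x z + d z y))"

definition is_preorder :: "('a \<Rightarrow> 'a \<Rightarrow> bool) \<Rightarrow> bool" where
  "is_preorder le \<longleftrightarrow> (\<forall>x. le x x) \<and> (\<forall>x y z. le x y \<longrightarrow> le y z \<longrightarrow> le x z)"

definition strict :: "('a \<Rightarrow> 'a \<Rightarrow> bool) \<Rightarrow> 'a \<Rightarrow> 'a \<Rightarrow> bool" where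
  "strict le x y \<longleftrightarrow> le x y \<and> x \<noteq> y"

definition preordered_s_regular_b_metric ::
  "('a \<Rightarrow> 'a \<Rightarrow> real) \<Rightarrow> real \<Rightarrow> ('a \<Rightarrow> 'a \<Rightarrow> bool) \<Rightarrow> bool" where
  "preordered_s_regular_b_metric d s le \<longleftrightarrow> b_metric d s \<and> is_preorder le \<and>
     (\<forall>x y z. le x y \<longrightarrow> le y z \<longrightarrow> max (d x y) (d y z) \<le> s\<^sup>2 * d x z)"

definition is_chain :: "('a \<Rightarrow> 'a \<Rightarrow> bool) \<Rightarrow> 'a set \<Rightarrow> bool" where
  "is_chain le C \<longleftrightarrow> (\<forall>x\<in>C. \<forall>y\<in>C. le x y \<or> le y x)"

definition isotone :: "('a \<Rightarrow> 'a \<Rightarrow> bool) \<Rightarrow> ('a \<Rightarrow> 'a) \<Rightarrow> bool" where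
  "isotone le T \<longleftrightarrow> (\<forall>x y. le x y \<longrightarrow> le (T x) (T y))"

definition O_X :: "('a \<Rightarrow> 'a \<Rightarrow> bool) \<Rightarrow> 'a \<Rightarrow> 'a set" where
  "O_X le x0 = {x. le x x0}"

definition Coin :: "('a \<Rightarrow> 'a) \<Rightarrow> ('a \<Rightarrow> 'a) \<Rightarrow> 'a set" where
  "Coin T S = {x. T x = S x}"

definition covers_on :: "('a \<Rightarrow> 'a \<Rightarrow> bool) \<Rightarrow> ('a \<Rightarrow> 'a) \<Rightarrow> ('a \<Rightarrow> 'a) \<Rightarrow> 'a set \<Rightarrow> bool" where
  "covers_on le S T A \<longleftrightarrow> (\<forall>x\<in>A. le (T x) (S x) \<longrightarrow> (\<exists>y. le y x \<and> S y = T x))"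

definition chains_TS :: "('a \<Rightarrow> 'a) \<Rightarrow> ('a \<Rightarrow> 'a) \<Rightarrow> ('a \<Rightarrow> 'a \<Rightarrow> bool) \<Rightarrow> 'a set set" where
  "chains_TS T S le = {C. is_chain le C \<and>
      (\<forall>x\<in>C. le (T x) (S x)) \<and>
      (\<forall>x\<in>C. \<forall>y\<in>C. strict le x y \<longrightarrow> le (S x) (T y)) \<and>
      S ` C \<subseteq> range T}"

definition chains_TS_x0 :: "'a \<Rightarrow> ('a \<Rightarrow> 'a) \<Rightarrow> ('a \<Rightarrow> 'a) \<Rightarrow> ('a \<Rightarrow> 'a \<Rightarrow> bool) \<Rightarrow> 'a set set" where
  "chains_TS_x0 x0 T S le = {C \<in> chains_TS T S le. C \<subseteq> O_X le x0 \<and> S ` C \<subseteq> T ` O_X le x0}"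

definition minimal_in :: "('a \<Rightarrow> 'a \<Rightarrow> bool) \<Rightarrow> 'a set \<Rightarrow> 'a \<Rightarrow> bool" where
  "minimal_in le A w \<longleftrightarrow> w \<in> A \<and> \<not> (\<exists>u\<in>A. strict le u w)"

end

theory Submission
  imports Defs
begin

(* Apply Zorn's lemma to the admissible chains C(x0,T,S) ordered by inclusion: they are closed
   under unions of nested families, and the covering hypothesis yields a singleton one.  Let w be
   the lower bound of a maximal chain M given by (iii).  Along S^(i+1) z <= S w <= T w <= T^(i+1) w,
   s-regularity gives d(S w, T w) <= s^4 d(T^(i+1) w, S^(i+1) z) -> 0, so w is a coincidence point.
   It is minimal: a coincidence point u strictly below w could be added to M, contradicting
   maximality, since regularity makes the preorder antisymmetric. *)

lemma is_preorder_refl: "is_preorder le \<Longrightarrow> le x x"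
  by (simp add: is_preorder_def)

lemma is_preorder_trans: "is_preorder le \<Longrightarrow> le x y \<Longrightarrow> le y z \<Longrightarrow> le x z"
  unfolding is_preorder_def by blast

lemma isotoneD: "isotone le T \<Longrightarrow> le x y \<Longrightarrow> le (T x) (T y)"
  by (simp add: isotone_def)

lemma antisymp_if_s_regular:
  assumes "preordered_s_regular_b_metric d s le"
  shows "antisymp le"
proof
  fix x y assume "le x y" "le y x"
  then have "max (d x y) (d y x) \<le> s\<^sup>2 * d x x"
    using assms by (simp add: preordered_s_regular_b_metric_def)
  moreover have "d x x = 0" and "d x y \<ge> 0" and "d x y = 0 \<longleftrightarrow> x = y"
    using assms by (simp_all add: preordered_s_regular_b_metric_def b_metric_def)
  ultimately show "x = y" by simp
qed

lemma le_funpow_if_le_image: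
  assumes "is_preorder le" "isotone le T" "le w (T w)"
  shows "le w ((T ^^ i) w)"
proof (induction i)
  case 0
  show ?case using assms(1) by (simp add: is_preorder_refl)
next
  case (Suc i)
  have "le (T w) (T ((T ^^ i) w))" using assms(2) Suc.IH by (rule isotoneD)
  then show ?case using assms(1,3) by (auto intro: is_preorder_trans)
qed

lemma coincidence_if_squeezed:
  assumes space: "preordered_s_regular_b_metric d s le"
    and iso: "isotone le T"
    and wTw: "le w (T w)" and SwTw: "le (S w) (T w)"
    and below: "\<And>i. le ((S ^^ i) z) (S w)"
    and lim: "(\<lambda>i. d ((T ^^ i) w) ((S ^^ i) z)) \<longlonglongrightarrow> 0"
  shows "T w = S w"
proof -
  have pre: "is_preorder le"
    and reg: "\<And>x y z. le x y \<Longrightarrow> le y z \<Longrightarrow> max (d x y) (d y z) \<le> s\<^sup>2 * d x z"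
    and dist: "\<And>x y. d x y \<ge> 0" "\<And>x y. d x y = 0 \<longleftrightarrow> x = y" "\<And>x y. d x y = d y x"
    using space by (auto simp: preordered_s_regular_b_metric_def b_metric_def)
  define t where "t i = (T ^^ Suc i) w" for i
  have Tw_t: "le (T w) (t i)" for i
    unfolding t_def using isotoneD[OF iso le_funpow_if_le_image[OF pre iso wTw]] by simp
  have bound: "d (S w) (T w) \<le> s\<^sup>2 * s\<^sup>2 * d (t i) ((S ^^ Suc i) z)" for i
  proof -
    have "d (S w) (T w) \<le> s\<^sup>2 * d (S w) (t i)"
      using reg[OF SwTw Tw_t] by simp
    also have "d (S w) (t i) \<le> s\<^sup>2 * d ((S ^^ Suc i) z) (t i)"
      using reg[OF below[of "Suc i"] is_preorder_trans[OF pre SwTw Tw_t]]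
      by (simp del: funpow.simps)
    finally show ?thesis
      by (simp add: dist(3) mult.assoc mult_left_mono)
  qed
  have "(\<lambda>i. s\<^sup>2 * s\<^sup>2 * d (t i) ((S ^^ Suc i) z)) \<longlonglongrightarrow> s\<^sup>2 * s\<^sup>2 * 0"
    unfolding t_def using LIMSEQ_Suc[OF lim] by (intro tendsto_mult_left) simp
  then have "d (S w) (T w) \<le> 0"
    using bound by (intro LIMSEQ_le_const) auto
  then show ?thesis using dist[of "S w" "T w"] by simp
qed

(* The requirement S ` C \<subseteq> range T is subsumed by S ` C \<subseteq> T ` O_X le x0. *)
lemma mem_chains_TS_x0_iff:
  "C \<in> chains_TS_x0 x0 T S le \<longleftrightarrow>
     (\<forall>x\<in>C. \<forall>y\<in>C. le x y \<or> le y x) \<and>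
     (\<forall>x\<in>C. \<forall>y\<in>C. le x y \<longrightarrow> x \<noteq> y \<longrightarrow> le (S x) (T y)) \<and>
     (\<forall>x\<in>C. le (T x) (S x) \<and> le x x0 \<and> (\<exists>v. le v x0 \<and> S x = T v))"
  unfolding chains_TS_x0_def chains_TS_def is_chain_def strict_def O_X_def by blast

lemma Union_chain_in_chains_TS_x0:
  assumes "\<C> \<in> chains (chains_TS_x0 x0 T S le)"
  shows "\<Union>\<C> \<in> chains_TS_x0 x0 T S le"
proof -
  have members: "\<And>C. C \<in> \<C> \<Longrightarrow> C \<in> chains_TS_x0 x0 T S le"
    and nested: "\<And>C D. C \<in> \<C> \<Longrightarrow> D \<in> \<C> \<Longrightarrow> C \<subseteq> D \<or> D \<subseteq> C"
    using assms unfolding chains_def chain_subset_def by auto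
  have common: "\<exists>C\<in>\<C>. x \<in> C \<and> y \<in> C" if "x \<in> \<Union>\<C>" "y \<in> \<Union>\<C>" for x y
    using that nested by blast
  show ?thesis
    unfolding mem_chains_TS_x0_iff
  proof (intro conjI ballI impI)
    fix x y assume "x \<in> \<Union>\<C>" "y \<in> \<Union>\<C>"
    then obtain C where "C \<in> \<C>" "x \<in> C" "y \<in> C" using common by blast
    then have "C \<in> chains_TS_x0 x0 T S le" using members by blast
    then show "le x y \<or> le y x" and "le x y \<Longrightarrow> x \<noteq> y \<Longrightarrow> le (S x) (T y)"
      using \<open>x \<in> C\<close> \<open>y \<in> C\<close> unfolding mem_chains_TS_x0_iff by blast+
  next
    fix x assume "x \<in> \<Union>\<C>"
    then show "le (T x) (S x)" "le x x0" "\<exists>v. le v x0 \<and> S x = T v"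
      using members unfolding mem_chains_TS_x0_iff by blast+
  qed
qed

lemma singleton_in_chains_TS_x0:
  assumes "is_preorder le" "isotone le T" "le y x0" "S y = T x0"
  shows "{y} \<in> chains_TS_x0 x0 T S le"
  using assms isotoneD[OF assms(2,3)] is_preorder_refl[OF assms(1)]
  unfolding mem_chains_TS_x0_iff by auto

lemma insert_coincidence_in_chains_TS_x0:
  assumes pre: "is_preorder le" and anti: "antisymp le" and iso: "isotone le T"
    and M: "M \<in> chains_TS_x0 x0 T S le"
    and u: "u \<in> Coin T S \<inter> O_X le x0" and lower: "\<forall>x\<in>M. le u x"
  shows "insert u M \<in> chains_TS_x0 x0 T S le"
proof -
  have Tu: "T u = S u" and "le u x0" using u by (simp_all add: Coin_def O_X_def)
  have not_above: "\<not> le x u" if "x \<in> M" "x \<noteq> u" for x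
    using that lower anti by (auto dest: antisympD)
  show ?thesis
    using M Tu \<open>le u x0\<close> lower not_above is_preorder_refl[OF pre] isotoneD[OF iso]
    unfolding mem_chains_TS_x0_iff by (metis insert_iff)
qed

lemma minimal_coincidence_if_lower_bound_of_maximal:
  assumes pre: "is_preorder le" and anti: "antisymp le" and iso: "isotone le T"
    and M: "M \<in> chains_TS_x0 x0 T S le"
    and maximal: "\<forall>C\<in>chains_TS_x0 x0 T S le. M \<subseteq> C \<longrightarrow> C = M"
    and w: "w \<in> Coin T S \<inter> O_X le x0" and lower: "\<forall>x\<in>M. le w x"
  shows "minimal_in le (Coin T S \<inter> O_X le x0) w"
  unfolding minimal_in_def
proof (intro conjI w notI)
  assume "\<exists>u\<in>Coin T S \<inter> O_X le x0. strict le u w"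
  then obtain u where u: "u \<in> Coin T S \<inter> O_X le x0" and "le u w" "u \<noteq> w"
    by (auto simp: strict_def)
  then have "\<forall>x\<in>M. le u x" using lower is_preorder_trans[OF pre] by blast
  then have "insert u M = M"
    using maximal insert_coincidence_in_chains_TS_x0[OF pre anti iso M u] by blast
  then have "le w u" using lower by blast
  then show False using \<open>le u w\<close> \<open>u \<noteq> w\<close> anti by (auto dest: antisympD)
qed

theorem theorem2p1:
  fixes d :: "'a \<Rightarrow> 'a \<Rightarrow> real" and s :: real and le :: "'a \<Rightarrow> 'a \<Rightarrow> bool"
    and T S :: "'a \<Rightarrow> 'a" and x0 :: 'a
  assumes space: "preordered_s_regular_b_metric d s le"
    and x0: "le (T x0) (S x0)"
    and iso: "isotone le T"
    and cov: "covers_on le S T (O_X le x0)"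
    and lb: "\<forall>C \<in> chains_TS_x0 x0 T S le. \<exists>w. (\<forall>x\<in>C. le w x) \<and> le w (T w) \<and>
               (\<exists>z. (\<forall>i::nat. le ((S ^^ i) z) (S w) \<and> le (S w) (T w)) \<and>
                    (\<lambda>i. d ((T ^^ i) w) ((S ^^ i) z)) \<longlonglongrightarrow> 0)"
  shows "Coin T S \<inter> O_X le x0 \<noteq> {} \<and> (\<exists>w. minimal_in le (Coin T S \<inter> O_X le x0) w)"
proof -
  have pre: "is_preorder le" and anti: "antisymp le"
    using space antisymp_if_s_regular by (auto simp: preordered_s_regular_b_metric_def)
  obtain y where "le y x0" "S y = T x0"
    using cov x0 is_preorder_refl[OF pre] by (auto simp: covers_on_def O_X_def)
  then have y: "{y} \<in> chains_TS_x0 x0 T S le"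
    using singleton_in_chains_TS_x0[OF pre iso] by blast
  obtain M where M: "M \<in> chains_TS_x0 x0 T S le"
    and maximal: "\<forall>C\<in>chains_TS_x0 x0 T S le. M \<subseteq> C \<longrightarrow> C = M"
    using Zorn_Lemma[of "chains_TS_x0 x0 T S le"] Union_chain_in_chains_TS_x0 by metis
  have "M \<noteq> {}"
    using maximal y by fastforce
  then obtain m where "m \<in> M" by blast
  obtain w z where lower: "\<forall>x\<in>M. le w x" and "le w (T w)" "le (S w) (T w)"
    and "\<And>i. le ((S ^^ i) z) (S w)" and "(\<lambda>i. d ((T ^^ i) w) ((S ^^ i) z)) \<longlonglongrightarrow> 0"
    using lb[rule_format, OF M] by blast
  then have "T w = S w" using coincidence_if_squeezed[OF space iso] by blast
  moreover have "le w x0"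
    using lower \<open>m \<in> M\<close> M is_preorder_trans[OF pre] unfolding mem_chains_TS_x0_iff by blast
  ultimately have w: "w \<in> Coin T S \<inter> O_X le x0" by (simp add: Coin_def O_X_def)
  then show ?thesis
    using minimal_coincidence_if_lower_bound_of_maximal[OF pre anti iso M maximal w lower] by blast
qed

end
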